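(* Let $\Omega\subset\mathbb{R}^n$ ($n\ge 2$) be a domain, let $1\le s<\infty$, let $T=T_{l,r,c}$ be an essential tube for $\Omega$ with corresponding component $\Omega_T$, and let $z_0\in\Omega$ be any point not in $\Omega_T$. Then \[ \int_{\Omega_T} k(z,z_0;\Omega)^s\,dz \;\ge\; C(s,n)\, c\, r^{n}\left(\frac{l}{r}\right)^{s+1}, \] where $C(s,n)>0$ is a constant depending only on $s$ and $n$.
   Context: For $k\ge1$, $D_r^k\subset\mathbb{R}^k$ denotes the closed $k$-dimensional disk of radius $r$ centered at the origin. A tube $T_{l,r}$ in $\mathbb{R}^n$ is the image under a Euclidean (rigid) transformation of the cylinder $[0,l]\times D_r^{n-1}$; the images of $\{0\}\times D_r^{n-1}$ and $\{l\}\times D_r^{n-1}$ are its ends, and the image of $[0,l]\times\partial D_r^{n-1}$ is its wall. For $t\in[0,l]$, the $t$-th slice of a subset of $T$ is its intersection with the image of $\{t\}\times D_r^{n-1}$. An essential tube $T=T_{l,r,c}$ for a domain $\Omega$ is a tube $T_{l,r}$ such that $T\cap\Omega$ has a connected component $\Omega_T$ with: (i) $\Omega_T$ does not meet the wall of $T$; (ii) $c>0$ and for every $t\in[0,l]$ the $(n-1)$-dimensional measure of the $t$-th slice of $\Omega_T$ is at least $c$ times the $(n-1)$-dimensional measure of $D_r^{n-1}$. The quasihyperbolic distance is $k(z,z_0;\Omega)=\inf_\gamma\int_\gamma \frac{d\sigma}{d(\zeta,\partial\Omega)}$, the infimum over rectifiable curves $\gamma\subset\Omega$ joining $z$ to $z_0$;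 $dz$ is Lebesgue measure. *)

theory Defs
  imports "HOL-Analysis.Analysis"
begin

definition curve_variation :: "(real \<Rightarrow> 'a::metric_space) \<Rightarrow> real \<Rightarrow> real \<Rightarrow> real" where
  "curve_variation g a b =
     Sup {(\<Sum>i<k. dist (g (p (Suc i))) (g (p i))) | k p.
            p 0 = a \<and> p k = b \<and> (\<forall>i<k. p i \<le> p (Suc i))}"

definition rectifiable_path :: "(real \<Rightarrow> 'a::metric_space) \<Rightarrow> bool" where
  "rectifiable_path g \<longleftrightarrow> path g \<and>
     bdd_above {(\<Sum>i<k. dist (g (p (Suc i))) (g (p i))) | k p.
            p 0 = 0 \<and> p k = 1 \<and> (\<forall>i<k. p i \<le> p (Suc i))}"

text \<open>Line integral with respect to arc length: Lebesgue-Stieltjes integral of f o g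
  against the arc-length function t |-> length of g on [0,t].\<close>
definition arclength_integral :: "('a::metric_space \<Rightarrow> real) \<Rightarrow> (real \<Rightarrow> 'a) \<Rightarrow> ennreal" where
  "arclength_integral f g =
     (\<integral>\<^sup>+ t. ennreal (f (g t))
        \<partial>interval_measure (\<lambda>t. curve_variation g 0 (max 0 (min 1 t))))"

definition qh_dist :: "'a::euclidean_space set \<Rightarrow> 'a \<Rightarrow> 'a \<Rightarrow> real" where
  "qh_dist \<Omega> z z0 = enn2real
     (INF g \<in> {g. rectifiable_path g \<and> path_image g \<subseteq> \<Omega> \<and>
                  pathstart g = z \<and> pathfinish g = z0}.
        arclength_integral (\<lambda>\<zeta>. 1 / infdist \<zeta> (frontier \<Omega>)) g)"

text \<open>R^n is modelled as real \<times> (real^'m) (so n = CARD('m) + 1 \<ge> 2); the first coordinate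
  is the axis of the standard cylinder [0,l] \<times> D_r^{n-1}.\<close>
definition rigid :: "('a::metric_space \<Rightarrow> 'a) \<Rightarrow> bool" where
  "rigid f \<longleftrightarrow> (\<forall>x y. dist (f x) (f y) = dist x y)"

definition tube :: "(real \<times> (real^'m) \<Rightarrow> real \<times> (real^'m)) \<Rightarrow> real \<Rightarrow> real \<Rightarrow> (real \<times> (real^'m)) set" where
  "tube f l r = f ` ({0..l} \<times> cball 0 r)"

definition tube_wall :: "(real \<times> (real^'m) \<Rightarrow> real \<times> (real^'m)) \<Rightarrow> real \<Rightarrow> real \<Rightarrow> (real \<times> (real^'m)) set" where
  "tube_wall f l r = f ` ({0..l} \<times> sphere 0 r)"

definition tube_slice :: "(real \<times> (real^'m) \<Rightarrow> real \<times> (real^'m)) \<Rightarrow> real \<Rightarrow> (real \<times> (real^'m)) set \<Rightarrow> real \<Rightarrow> (real^'m) set" where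
  "tube_slice f r S t = {y. norm y \<le> r \<and> f (t, y) \<in> S}"

definition essential_tube :: "(real \<times> (real^'m)) set \<Rightarrow> (real \<times> (real^'m) \<Rightarrow> real \<times> (real^'m))
     \<Rightarrow> real \<Rightarrow> real \<Rightarrow> real \<Rightarrow> (real \<times> (real^'m)) set \<Rightarrow> bool" where
  "essential_tube \<Omega> f l r c \<Omega>T \<longleftrightarrow>
     0 < l \<and> 0 < r \<and> 0 < c \<and> rigid f \<and>
     \<Omega>T \<in> components (tube f l r \<inter> \<Omega>) \<and>
     \<Omega>T \<inter> tube_wall f l r = {} \<and>
     (\<forall>t\<in>{0..l}. measure lebesgue (tube_slice f r \<Omega>T t)
                    \<ge> c * measure lebesgue (cball (0::real^'m) r))"

end

theory Submission
  imports Defs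
begin

text \<open>Every point of \<open>\<Omega>T\<close> lies within \<open>2 r\<close> of \<open>\<partial>\<Omega>\<close>: inside its slice, the segment to the wall of
  the tube cannot stay in \<open>\<Omega>\<close>, because \<open>\<Omega>T\<close> is a component of \<open>T \<inter> \<Omega>\<close> that misses the wall.
  A curve from \<open>z \<in> \<Omega>T\<close> to \<open>z0 \<notin> \<Omega>T\<close> can only leave \<open>\<Omega>T\<close> through an end of the tube: near a
  point of \<open>\<Omega>T\<close> in the open core of \<open>T\<close> it stays in \<open>T \<inter> \<Omega>\<close>, hence by connectedness in \<open>\<Omega>T\<close>.
  So its quasihyperbolic length is at least \<open>dist z (ends) / (2 r)\<close>, which is \<open>\<ge> l / (8 r)\<close> on the
  middle half of the tube. By Fubini and the slice condition the middle half of \<open>\<Omega>T\<close> has measure at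
  least \<open>c |D\<^sub>r| l / 2\<close> (rigid motions preserve Lebesgue measure), so the integral is at least
  \<open>(l / (8 r))\<^sup>s c |D\<^sub>1| r\<^sup>n\<^sup>-\<^sup>1 l / 2 = C c r\<^sup>n (l / r)\<^sup>s\<^sup>+\<^sup>1\<close>.\<close>

section \<open>Variation of a curve\<close>

definition variation_sums :: "(real \<Rightarrow> 'a::metric_space) \<Rightarrow> real \<Rightarrow> real \<Rightarrow> real set" where
  "variation_sums g a b = {(\<Sum>i<k. dist (g (p (Suc i))) (g (p i))) | k p.
            p 0 = a \<and> p k = b \<and> (\<forall>i<k. p i \<le> p (Suc i))}"

lemma curve_variation_eq_Sup: "curve_variation g a b = Sup (variation_sums g a b)"
  unfolding curve_variation_def variation_sums_def by simp

lemma rectifiable_path_iff_bdd_above: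
  "rectifiable_path g \<longleftrightarrow> path g \<and> bdd_above (variation_sums g 0 1)"
  by (simp add: rectifiable_path_def variation_sums_def)

lemma sum_lessThan_add:
  "(\<Sum>i<m + n. f i) = (\<Sum>i<m. f i) + (\<Sum>i<n. f (m + i))" for f :: "nat \<Rightarrow> real"
  by (induction n) (simp_all add: add.assoc)

lemma partition_mono:
  fixes p :: "nat \<Rightarrow> real"
  assumes "\<forall>i<k. p i \<le> p (Suc i)" "i \<le> j" "j \<le> k"
  shows "p i \<le> p j"
  using assms(2,3)
proof (induction j)
  case (Suc j)
  then show ?case
    using assms(1) by (cases "i = Suc j") (auto intro: order_trans)
qed simp

lemma partition_range:
  fixes p :: "nat \<Rightarrow> real"
  assumes "\<forall>i<k. p i \<le> p (Suc i)" "i \<le> k"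
  shows "p 0 \<le> p i" "p i \<le> p k"
  using partition_mono[OF assms(1)] assms(2) by auto

lemma dist_in_variation_sums: "a \<le> b \<Longrightarrow> dist (g b) (g a) \<in> variation_sums g a b"
  unfolding variation_sums_def
  by (intro CollectI exI[of _ 1] exI[of _ "\<lambda>i. if i = 0 then a else b"]) auto

lemma variation_sums_nonempty: "a \<le> b \<Longrightarrow> variation_sums g a b \<noteq> {}"
  using dist_in_variation_sums by blast

lemma variation_sums_same: "variation_sums g a a = {0}"
proof -
  have "x = 0" if x: "x \<in> variation_sums g a a" for x
  proof -
    obtain k p where x: "x = (\<Sum>i<k. dist (g (p (Suc i))) (g (p i)))"
      and p: "p 0 = a" "p k = a" "\<forall>i<k. p i \<le> p (Suc i)"
      using x unfolding variation_sums_def by blast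
    have "p i = a" if "i \<le> k" for i
      using partition_range[OF p(3) that] p by simp
    then show ?thesis using x by simp
  qed
  then show ?thesis using variation_sums_nonempty[of a a g] by blast
qed

lemma variation_sums_concat:
  assumes "x \<in> variation_sums g a b" "y \<in> variation_sums g b c"
  shows "x + y \<in> variation_sums g a c"
proof -
  obtain k1 p1 where x: "x = (\<Sum>i<k1. dist (g (p1 (Suc i))) (g (p1 i)))"
    and p1: "p1 0 = a" "p1 k1 = b" "\<forall>i<k1. p1 i \<le> p1 (Suc i)"
    using assms(1) unfolding variation_sums_def by blast
  obtain k2 p2 where y: "y = (\<Sum>i<k2. dist (g (p2 (Suc i))) (g (p2 i)))"
    and p2: "p2 0 = b" "p2 k2 = c" "\<forall>i<k2. p2 i \<le> p2 (Suc i)"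
    using assms(2) unfolding variation_sums_def by blast
  define p where "p i = (if i \<le> k1 then p1 i else p2 (i - k1))" for i
  have p_shift: "p (k1 + i) = p2 i" for i
    using p1(2) p2(1) by (auto simp: p_def)
  have "(\<Sum>i<k1 + k2. dist (g (p (Suc i))) (g (p i))) = x + y"
    unfolding sum_lessThan_add x y using p_shift[of "Suc _"] p1(2) p2(1)
    by (auto simp: p_shift p_def intro!: sum.cong)
  moreover have "\<forall>i<k1 + k2. p i \<le> p (Suc i)"
  proof (intro allI impI)
    fix i assume i: "i < k1 + k2"
    show "p i \<le> p (Suc i)"
    proof (cases "i < k1")
      case True then show ?thesis using p1(3) by (auto simp: p_def)
    next
      case False
      then obtain j where "i = k1 + j" "j < k2" using i by (metis add_less_imp_less_left le_Suc_ex not_less)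
      then show ?thesis using p_shift[of j] p_shift[of "Suc j"] p2(3) by simp
    qed
  qed
  moreover have "p 0 = a" "p (k1 + k2) = c" using p1 p_shift[of k2] p2 by (auto simp: p_def)
  ultimately show ?thesis unfolding variation_sums_def by (intro CollectI exI[of _ "k1 + k2"] exI[of _ p]) simp
qed

lemma variation_sums_split:
  assumes "x \<in> variation_sums g a c" "a \<le> b" "b \<le> c"
  obtains x1 x2 where "x1 \<in> variation_sums g a b" "x2 \<in> variation_sums g b c" "x \<le> x1 + x2"
proof -
  obtain k p where x: "x = (\<Sum>i<k. dist (g (p (Suc i))) (g (p i)))"
    and p: "p 0 = a" "p k = c" "\<forall>i<k. p i \<le> p (Suc i)"
    using assms(1) unfolding variation_sums_def by blast
  define q1 where "q1 i = min b (p i)" for i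
  define q2 where "q2 i = max b (p i)" for i
  have "(\<Sum>i<k. dist (g (q1 (Suc i))) (g (q1 i))) \<in> variation_sums g a b"
    unfolding variation_sums_def using p assms(2,3)
    by (auto simp: q1_def intro!: exI[of _ k] exI[of _ q1])
  moreover have "(\<Sum>i<k. dist (g (q2 (Suc i))) (g (q2 i))) \<in> variation_sums g b c"
    unfolding variation_sums_def using p assms(2,3)
    by (auto simp: q2_def intro!: exI[of _ k] exI[of _ q2])
  moreover have "x \<le> (\<Sum>i<k. dist (g (q1 (Suc i))) (g (q1 i))) + (\<Sum>i<k. dist (g (q2 (Suc i))) (g (q2 i)))"
    unfolding x sum.distrib[symmetric]
  proof (rule sum_mono)
    fix i assume "i \<in> {..<k}"
    then have le: "p i \<le> p (Suc i)" using p(3) by simp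
    show "dist (g (p (Suc i))) (g (p i)) \<le> dist (g (q1 (Suc i))) (g (q1 i)) + dist (g (q2 (Suc i))) (g (q2 i))"
    proof (cases "p (Suc i) \<le> b \<or> b \<le> p i")
      case True
      then show ?thesis using le by (auto simp: q1_def q2_def)
    next
      case False
      then have "q1 (Suc i) = b" "q1 i = p i" "q2 (Suc i) = p (Suc i)" "q2 i = b"
        using le by (auto simp: q1_def q2_def)
      then show ?thesis using dist_triangle[of "g (p (Suc i))" "g (p i)" "g b"]
        by (simp add: dist_commute)
    qed
  qed
  ultimately show ?thesis using that by blast
qed

lemma bdd_above_variation_sums_subinterval:
  assumes "bdd_above (variation_sums g 0 1)" "0 \<le> a" "a \<le> b" "b \<le> 1"
  shows "bdd_above (variation_sums g a b)"
proof -
  obtain M where M: "\<And>x. x \<in> variation_sums g 0 1 \<Longrightarrow> x \<le> M"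
    using assms(1) unfolding bdd_above_def by blast
  show ?thesis
  proof (rule bdd_aboveI)
    fix x assume "x \<in> variation_sums g a b"
    then have "dist (g a) (g 0) + x \<in> variation_sums g 0 b"
      using assms by (intro variation_sums_concat[OF dist_in_variation_sums])
    then have "dist (g a) (g 0) + x + dist (g 1) (g b) \<in> variation_sums g 0 1"
      using assms by (intro variation_sums_concat[OF _ dist_in_variation_sums])
    then have "dist (g a) (g 0) + x + dist (g 1) (g b) \<le> M" by (rule M)
    then show "x \<le> M" by (smt (verit) zero_le_dist)
  qed
qed

context
  fixes g :: "real \<Rightarrow> 'a::metric_space"
  assumes bounded_variation: "bdd_above (variation_sums g 0 1)"
begin

lemma variation_sum_le_curve_variation:
  assumes "0 \<le> a" "a \<le> b" "b \<le> 1" "x \<in> variation_sums g a b"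
  shows "x \<le> curve_variation g a b"
  unfolding curve_variation_eq_Sup
  using assms bdd_above_variation_sums_subinterval[OF bounded_variation] by (intro cSup_upper) auto

lemma dist_le_curve_variation:
  assumes "0 \<le> a" "a \<le> b" "b \<le> 1"
  shows "dist (g b) (g a) \<le> curve_variation g a b"
  using assms by (intro variation_sum_le_curve_variation dist_in_variation_sums)

lemma curve_variation_nonneg:
  assumes "0 \<le> a" "a \<le> b" "b \<le> 1"
  shows "0 \<le> curve_variation g a b"
  using dist_le_curve_variation[OF assms] zero_le_dist order_trans by blast

lemma curve_variation_additive:
  assumes "0 \<le> a" "a \<le> b" "b \<le> c" "c \<le> 1"
  shows "curve_variation g a c = curve_variation g a b + curve_variation g b c"
proof (rule antisym)
  show "curve_variation g a c \<le> curve_variation g a b + curve_variation g b c"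
    unfolding curve_variation_eq_Sup[of g a c]
  proof (rule cSup_least)
    show "variation_sums g a c \<noteq> {}" using assms by (intro variation_sums_nonempty) simp
    fix x assume "x \<in> variation_sums g a c"
    then obtain x1 x2 where "x1 \<in> variation_sums g a b" "x2 \<in> variation_sums g b c" "x \<le> x1 + x2"
      using variation_sums_split assms by (metis order.trans)
    moreover from calculation have "x1 \<le> curve_variation g a b" "x2 \<le> curve_variation g b c"
      using variation_sum_le_curve_variation assms by auto
    ultimately show "x \<le> curve_variation g a b + curve_variation g b c" by simp
  qed
next
  have "curve_variation g a b \<le> curve_variation g a c - curve_variation g b c"
    unfolding curve_variation_eq_Sup[of g a b]
  proof (rule cSup_least)
    show "variation_sums g a b \<noteq> {}" using assms by (intro variation_sums_nonempty)
    fix x1 assume x1: "x1 \<in> variation_sums g a b"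
    have "curve_variation g b c \<le> curve_variation g a c - x1"
      unfolding curve_variation_eq_Sup[of g b c]
    proof (rule cSup_least)
      show "variation_sums g b c \<noteq> {}" using assms by (intro variation_sums_nonempty)
      fix x2 assume "x2 \<in> variation_sums g b c"
      then have "x1 + x2 \<le> curve_variation g a c"
        using assms by (intro variation_sum_le_curve_variation variation_sums_concat[OF x1]) auto
      then show "x2 \<le> curve_variation g a c - x1" by simp
    qed
    then show "x1 \<le> curve_variation g a c - curve_variation g b c" by simp
  qed
  then show "curve_variation g a b + curve_variation g b c \<le> curve_variation g a c" by simp
qed

lemma curve_variation_mono:
  assumes "0 \<le> a" "a \<le> b" "b \<le> c" "c \<le> 1"
  shows "curve_variation g a b \<le> curve_variation g a c"
  using curve_variation_additive[OF assms] curve_variation_nonneg[of b c] assms by simp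

end

lemma partition_sum_le_first_step:
  fixes g :: "real \<Rightarrow> 'a::metric_space"
  assumes p: "p 0 = t" "\<forall>i<k. p i \<le> p (Suc i)" and "t < u"
    and gap: "\<forall>i\<le>k. p i = t \<or> u \<le> p i" and end_point: "u \<le> p k"
  shows "(\<Sum>i<k. dist (g (p (Suc i))) (g (p i)))
           \<le> dist (g u) (g t) + (\<Sum>i<k. dist (g (max u (p (Suc i)))) (g (max u (p i))))"
proof -
  \<comment> \<open>the terms are compared up to the telescoping correction \<open>\<psi> (Suc i) - \<psi> i\<close>\<close>
  define \<psi> where "\<psi> i = dist (g (min u (p i))) (g t)" for i
  have "dist (g (p (Suc i))) (g (p i))
          \<le> dist (g (max u (p (Suc i)))) (g (max u (p i))) + (\<psi> (Suc i) - \<psi> i)"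
    if i: "i < k" for i
  proof -
    have le: "p i \<le> p (Suc i)" using p(2) i by simp
    consider "p i = t" "p (Suc i) = t" | "p i = t" "u \<le> p (Suc i)" | "u \<le> p i"
      using gap i by (metis Suc_leI less_imp_le_nat)
    then show ?thesis
    proof cases
      case 1 then show ?thesis using \<open>t < u\<close> by (simp add: \<psi>_def)
    next
      case 2 then show ?thesis
        using \<open>t < u\<close> dist_triangle[of "g (p (Suc i))" "g t" "g u"] by (simp add: \<psi>_def)
    next
      case 3 then show ?thesis using le by (simp add: \<psi>_def)
    qed
  qed
  then have "(\<Sum>i<k. dist (g (p (Suc i))) (g (p i)))
      \<le> (\<Sum>i<k. dist (g (max u (p (Suc i)))) (g (max u (p i))) + (\<psi> (Suc i) - \<psi> i))"
    by (intro sum_mono) simp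
  also have "\<dots> = (\<Sum>i<k. dist (g (max u (p (Suc i)))) (g (max u (p i)))) + (\<psi> k - \<psi> 0)"
    by (simp add: sum.distrib sum_lessThan_telescope)
  also have "\<psi> k - \<psi> 0 = dist (g u) (g t)"
    using p(1) \<open>t < u\<close> end_point by (simp add: \<psi>_def)
  finally show ?thesis by simp
qed

lemma partition_gap:
  fixes p :: "nat \<Rightarrow> real"
  assumes "t < v" "\<forall>i\<le>k. t \<le> p i"
  obtains u where "t < u" "u \<le> v" "\<forall>i\<le>k. p i = t \<or> u \<le> p i"
proof -
  define P where "P = insert v {p i | i. i \<le> k \<and> t < p i}"
  have "finite P" unfolding P_def by simp
  have "t < Min P" using \<open>finite P\<close> assms(1) by (auto simp: P_def Min_gr_iff)
  moreover have "Min P \<le> v" by (rule Min_le[OF \<open>finite P\<close>]) (simp add: P_def)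
  moreover have "Min P \<le> p i" if "i \<le> k" "t < p i" for i
    by (rule Min_le[OF \<open>finite P\<close>]) (use that in \<open>auto simp: P_def\<close>)
  ultimately have "\<forall>i\<le>k. p i = t \<or> Min P \<le> p i" using assms(2) by force
  then show ?thesis using that \<open>t < Min P\<close> \<open>Min P \<le> v\<close> by blast
qed

lemma curve_variation_right_small:
  fixes g :: "real \<Rightarrow> 'a::metric_space"
  assumes g: "continuous_on {0..1} g" and bounded_variation: "bdd_above (variation_sums g 0 1)"
    and t: "0 \<le> t" "t < 1" and "0 < e"
  obtains u where "t < u" "u \<le> 1" "curve_variation g t u < e"
proof -
  have "curve_variation g t 1 - e/2 < Sup (variation_sums g t 1)"
    using \<open>0 < e\<close> unfolding curve_variation_eq_Sup by simp
  then obtain x where x: "x \<in> variation_sums g t 1" "curve_variation g t 1 - e/2 < x"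
    using less_cSup_iff variation_sums_nonempty bdd_above_variation_sums_subinterval[OF bounded_variation] t
    by (metis less_eq_real_def order_refl)
  obtain k p where x_eq: "x = (\<Sum>i<k. dist (g (p (Suc i))) (g (p i)))"
    and p: "p 0 = t" "p k = 1" "\<forall>i<k. p i \<le> p (Suc i)"
    using x(1) unfolding variation_sums_def by blast
  obtain \<eta> where \<eta>: "\<eta> > 0" "\<And>u. u \<in> {0..1} \<Longrightarrow> dist u t < \<eta> \<Longrightarrow> dist (g u) (g t) < e/2"
    using g t \<open>0 < e\<close> unfolding continuous_on_iff by (metis atLeastAtMost_iff half_gt_zero less_eq_real_def)
  obtain u where u: "t < u" "u \<le> min 1 (t + \<eta>/2)" and gap: "\<forall>i\<le>k. p i = t \<or> u \<le> p i"
    using partition_gap[of t "min 1 (t + \<eta>/2)" k p] t \<eta>(1) partition_range[OF p(3)] p(1) by auto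
  have "x \<le> dist (g u) (g t) + (\<Sum>i<k. dist (g (max u (p (Suc i)))) (g (max u (p i))))"
    unfolding x_eq using p u by (intro partition_sum_le_first_step gap) auto
  moreover have "dist (g u) (g t) < e/2"
    using u t by (intro \<eta>(2)) (auto simp: dist_real_def)
  moreover have "(\<Sum>i<k. dist (g (max u (p (Suc i)))) (g (max u (p i)))) \<in> variation_sums g u 1"
    unfolding variation_sums_def using p u by (intro CollectI exI[of _ k] exI[of _ "\<lambda>i. max u (p i)"]) auto
  then have "(\<Sum>i<k. dist (g (max u (p (Suc i)))) (g (max u (p i)))) \<le> curve_variation g u 1"
    using u t by (intro variation_sum_le_curve_variation[OF bounded_variation]) auto
  moreover have "curve_variation g t 1 = curve_variation g t u + curve_variation g u 1"
    using u t by (intro curve_variation_additive[OF bounded_variation]) auto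
  ultimately have "curve_variation g t u < e" using x(2) by linarith
  then show ?thesis using u by (intro that) auto
qed

section \<open>Arc-length integrals\<close>

definition arclength_function :: "(real \<Rightarrow> 'a::metric_space) \<Rightarrow> real \<Rightarrow> real" where
  "arclength_function g t = curve_variation g 0 (max 0 (min 1 t))"

lemma arclength_integral_eq:
  "arclength_integral h g = (\<integral>\<^sup>+ t. ennreal (h (g t)) \<partial>interval_measure (arclength_function g))"
  by (simp add: arclength_integral_def arclength_function_def[abs_def])

context
  fixes g :: "real \<Rightarrow> 'a::metric_space"
  assumes g: "rectifiable_path g"
begin

lemma arclength_function_mono: "mono (arclength_function g)"
proof (rule monoI)
  fix x y :: real assume "x \<le> y"
  have "bdd_above (variation_sums g 0 1)" using g by (simp add: rectifiable_path_iff_bdd_above)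
  from curve_variation_mono[OF this, of 0 "max 0 (min 1 x)" "max 0 (min 1 y)"] \<open>x \<le> y\<close>
  show "arclength_function g x \<le> arclength_function g y"
    unfolding arclength_function_def by simp
qed

lemma arclength_function_continuous_at_right:
  "continuous (at_right a) (arclength_function g)"
proof -
  have cont: "continuous_on {0..1} g" and bv: "bdd_above (variation_sums g 0 1)"
    using g unfolding rectifiable_path_iff_bdd_above path_def by auto
  have "\<exists>b>a. \<forall>y>a. y < b \<longrightarrow> dist (arclength_function g y) (arclength_function g a) < e"
    if "0 < e" for e
  proof -
    consider "a < 0" | "1 \<le> a" | "0 \<le> a" "a < 1" by linarith
    then show ?thesis
    proof cases
      case 1
      have "dist (arclength_function g y) (arclength_function g a) < e" if "y < 0" for y
        using 1 that \<open>0 < e\<close> by (simp add: arclength_function_def)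
      then show ?thesis using 1 by (intro exI[of _ 0]) simp
    next
      case 2
      have "dist (arclength_function g y) (arclength_function g a) < e" if "a < y" for y
        using 2 that \<open>0 < e\<close> by (simp add: arclength_function_def)
      then show ?thesis by (intro exI[of _ "a + 1"]) simp
    next
      case 3
      obtain u where u: "a < u" "u \<le> 1" "curve_variation g a u < e"
        using curve_variation_right_small[OF cont bv 3 \<open>0 < e\<close>] by blast
      have "dist (arclength_function g y) (arclength_function g a) < e" if y: "a < y" "y < u" for y
      proof -
        have "arclength_function g y = curve_variation g 0 y" "arclength_function g a = curve_variation g 0 a"
          using y u 3 by (simp_all add: arclength_function_def)
        moreover have "curve_variation g 0 y = curve_variation g 0 a + curve_variation g a y"
          using y u 3 by (intro curve_variation_additive[OF bv]) auto
        moreover have "curve_variation g a y \<le> curve_variation g a u" "0 \<le> curve_variation g a y"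
          using y u 3 by (intro curve_variation_mono[OF bv] curve_variation_nonneg[OF bv]; simp)+
        ultimately show ?thesis using u by (simp add: dist_real_def)
      qed
      then show ?thesis using u(1) by blast
    qed
  qed
  then show ?thesis
    unfolding continuous_within tendsto_iff eventually_at_right_field by simp
qed

lemma emeasure_arclength_Ioc:
  assumes "a \<le> b"
  shows "emeasure (interval_measure (arclength_function g)) {a<..b}
           = arclength_function g b - arclength_function g a"
  using arclength_function_mono arclength_function_continuous_at_right
  by (intro emeasure_interval_measure_Ioc[OF assms]) (auto dest: monoD)

lemma emeasure_arclength_unit_interval:
  "emeasure (interval_measure (arclength_function g)) {0<..\<sigma>} = curve_variation g 0 \<sigma>"
  if "0 \<le> \<sigma>" "\<sigma> \<le> 1" for \<sigma>
  using emeasure_arclength_Ioc[OF that(1)] that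
  by (simp add: arclength_function_def variation_sums_same curve_variation_eq_Sup)

lemma arclength_null_outside_unit_interval:
  "{..0} \<union> {1<..} \<in> null_sets (interval_measure (arclength_function g))"
proof -
  let ?M = "interval_measure (arclength_function g)"
  have "{..0} = (\<Union>n. {-real n<..0::real})"
  proof (intro set_eqI iffI)
    fix x :: real assume "x \<in> {..0}"
    moreover obtain n :: nat where "-x < n" using reals_Archimedean2 by blast
    ultimately have "x \<in> {-real n<..0}" by auto
    then show "x \<in> (\<Union>n. {-real n<..0})" by blast
  qed auto
  moreover have "{1<..} = (\<Union>n. {1<..1 + real n::real})"
  proof (intro set_eqI iffI)
    fix x :: real assume "x \<in> {1<..}"
    moreover obtain n :: nat where "x - 1 < n" using reals_Archimedean2 by blast
    ultimately have "x \<in> {1<..1 + real n}" by auto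
    then show "x \<in> (\<Union>n. {1<..1 + real n})" by blast
  qed auto
  moreover have "emeasure ?M (\<Union>n. {-real n<..0}) = 0" "emeasure ?M (\<Union>n. {1<..1 + real n}) = 0"
    by (intro emeasure_UN_eq_0; auto simp: emeasure_arclength_Ioc arclength_function_def)+
  ultimately show ?thesis by (intro null_sets.Un null_setsI) auto
qed

lemma arclength_integral_lower_bound:
  assumes "0 \<le> \<sigma>" "\<sigma> \<le> 1" "0 \<le> m" and h: "\<And>\<tau>. \<tau> \<in> {0<..\<sigma>} \<Longrightarrow> m \<le> h (g \<tau>)"
  shows "ennreal (m * dist (g \<sigma>) (g 0)) \<le> arclength_integral h g"
proof -
  let ?M = "interval_measure (arclength_function g)"
  have bv: "bdd_above (variation_sums g 0 1)" using g by (simp add: rectifiable_path_iff_bdd_above)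
  have "ennreal (m * dist (g \<sigma>) (g 0)) \<le> ennreal m * ennreal (curve_variation g 0 \<sigma>)"
    using assms dist_le_curve_variation[OF bv, of 0 \<sigma>] by (simp add: ennreal_mult' mult_left_mono ennreal_leI)
  also have "\<dots> = (\<integral>\<^sup>+ t. ennreal m * indicator {0<..\<sigma>} t \<partial>?M)"
    using assms by (simp add: emeasure_arclength_unit_interval nn_integral_cmult_indicator)
  also have "\<dots> \<le> (\<integral>\<^sup>+ t. ennreal (h (g t)) \<partial>?M)"
    by (intro nn_integral_mono) (auto simp: indicator_def intro!: ennreal_leI h)
  finally show ?thesis unfolding arclength_integral_eq .
qed

lemma arclength_integral_upper_bound:
  assumes "0 \<le> M" and h: "\<And>\<tau>. \<tau> \<in> {0<..1} \<Longrightarrow> h (g \<tau>) \<le> M"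
  shows "arclength_integral h g \<le> ennreal (M * curve_variation g 0 1)"
proof -
  let ?M = "interval_measure (arclength_function g)"
  have "AE t in ?M. ennreal (h (g t)) \<le> ennreal M * indicator {0<..1} t"
    by (rule AE_I'[OF arclength_null_outside_unit_interval]) (auto simp: indicator_def intro!: ennreal_leI h)
  then have "arclength_integral h g \<le> (\<integral>\<^sup>+ t. ennreal M * indicator {0<..1} t \<partial>?M)"
    unfolding arclength_integral_eq by (rule nn_integral_mono_AE)
  also have "\<dots> = ennreal (M * curve_variation g 0 1)"
    using assms by (simp add: nn_integral_cmult_indicator emeasure_arclength_unit_interval ennreal_mult')
  finally show ?thesis .
qed

end

section \<open>Rectifiable paths in open connected sets\<close>

lemma lipschitz_imp_rectifiable_path:
  assumes "path g"
    and L: "\<And>u v. u \<in> {0..1} \<Longrightarrow> v \<in> {0..1} \<Longrightarrow> u \<le> v \<Longrightarrow> dist (g v) (g u) \<le> L * (v - u)"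
  shows "rectifiable_path g"
  unfolding rectifiable_path_iff_bdd_above
proof (intro conjI assms bdd_aboveI)
  fix x assume "x \<in> variation_sums g 0 1"
  then obtain k p where x: "x = (\<Sum>i<k. dist (g (p (Suc i))) (g (p i)))"
    and p: "p 0 = 0" "p k = 1" "\<forall>i<k. p i \<le> p (Suc i)"
    unfolding variation_sums_def by blast
  have p01: "p i \<in> {0..1}" if "i \<le> k" for i
    using partition_range[OF p(3) that] p by auto
  have "x \<le> (\<Sum>i<k. L * (p (Suc i) - p i))"
    unfolding x by (rule sum_mono) (use p01 p(3) in \<open>auto intro!: L\<close>)
  also have "\<dots> = L" using p by (simp add: sum_distrib_left[symmetric] sum_lessThan_telescope)
  finally show "x \<le> L" .
qed

lemma polynomial_function_imp_rectifiable_path: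
  fixes g :: "real \<Rightarrow> 'a::euclidean_space"
  assumes "polynomial_function g"
  shows "rectifiable_path g"
proof -
  have cont: "continuous_on UNIV g"
    using assms continuous_on_polymonial_function by blast
  obtain g' where g': "polynomial_function g'" "\<And>x. (g has_vector_derivative (g' x)) (at x)"
    using has_vector_derivative_polynomial_function[OF assms] by blast
  have "compact (g' ` {0..1})"
    by (intro compact_continuous_image continuous_on_polymonial_function g' compact_Icc)
  then obtain B where B: "\<And>x. x \<in> g' ` {0..1} \<Longrightarrow> norm x \<le> B"
    using compact_imp_bounded bounded_iff by metis
  show ?thesis
  proof (rule lipschitz_imp_rectifiable_path)
    show "path g" unfolding path_def using cont continuous_on_subset by blast
    fix u v :: real assume uv: "u \<in> {0..1}" "v \<in> {0..1}" "u \<le> v"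
    show "dist (g v) (g u) \<le> B * (v - u)"
    proof (cases "u = v")
      case False
      then have "u < v" using uv by simp
      have "norm (g v - g u) \<le> B * v - B * u"
      proof (rule differentiable_bound_general[OF \<open>u < v\<close>, where f' = g' and \<phi>' = "\<lambda>_. B"])
        show "continuous_on {u..v} g" using cont continuous_on_subset by blast
        show "((\<lambda>x. B * x) has_vector_derivative B) (at x)" for x
          using has_vector_derivative_mult_right[OF has_vector_derivative_id, of B "at x"] by simp
        show "norm (g' x) \<le> B" if "u < x" "x < v" for x
          using B[of "g' x"] uv that by auto
      qed (auto intro: g'(2) continuous_intros)
      then show ?thesis by (simp add: dist_norm algebra_simps)
    qed simp
  qed
qed

lemma open_connected_rectifiable_path:
  fixes \<Omega> :: "'a::euclidean_space set"
  assumes "open \<Omega>" "connected \<Omega>" "x \<in> \<Omega>" "y \<in> \<Omega>"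
  obtains g where "rectifiable_path g" "path_image g \<subseteq> \<Omega>" "pathstart g = x" "pathfinish g = y"
  using connected_open_polynomial_connected[OF assms] polynomial_function_imp_rectifiable_path by blast

section \<open>Lebesgue measure is invariant under rigid motions\<close>

text \<open>The change-of-variables theorems of the library are stated for \<open>real^'n\<close> with a well-ordered
  index type, so \<open>real \<times> (real^'m)\<close> is identified with \<open>real^'m option_index\<close>, where
  \<open>'m option_index\<close> is a copy of \<open>'m option\<close> ordered through \<open>to_nat\<close>.\<close>

typedef 'a option_index = "UNIV :: 'a option set"
  morphisms option_of_index index_of_option
  by simp

lemma range_index_of_option: "range index_of_option = UNIV"
  by (rule surjI[of _ option_of_index]) (rule option_of_index_inverse)

instance option_index :: (finite) finite
proof
  have "finite (range (index_of_option :: 'a option \<Rightarrow> 'a option_index))" by simp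
  then show "finite (UNIV :: 'a option_index set)" by (simp only: range_index_of_option)
qed

instantiation option_index :: (finite) wellorder
begin

definition less_eq_option_index :: "'a option_index \<Rightarrow> 'a option_index \<Rightarrow> bool" where
  "less_eq_option_index x y \<longleftrightarrow> to_nat (option_of_index x) \<le> to_nat (option_of_index y)"

definition less_option_index :: "'a option_index \<Rightarrow> 'a option_index \<Rightarrow> bool" where
  "less_option_index x y \<longleftrightarrow> to_nat (option_of_index x) < to_nat (option_of_index y)"

instance
proof
  fix x y z :: "'a option_index"
  show "x < y \<longleftrightarrow> x \<le> y \<and> \<not> y \<le> x" "x \<le> x" "x \<le> y \<or> y \<le> x"
    by (auto simp: less_eq_option_index_def less_option_index_def)
  show "x \<le> y \<Longrightarrow> y \<le> z \<Longrightarrow> x \<le> z"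
    by (simp add: less_eq_option_index_def)
  show "x = y" if "x \<le> y" "y \<le> x"
  proof -
    have "to_nat (option_of_index x) = to_nat (option_of_index y)"
      using that by (simp add: less_eq_option_index_def)
    then show "x = y" by (metis inj_to_nat injD option_of_index_inject)
  qed
next
  fix P :: "'a option_index \<Rightarrow> bool" and x
  assume step: "\<And>x. (\<And>y. y < x \<Longrightarrow> P y) \<Longrightarrow> P x"
  show "P x"
  proof (induct x rule: measure_induct_rule[of "\<lambda>x. to_nat (option_of_index x)"])
    case (less x)
    then show ?case by (rule step) (simp add: less_option_index_def)
  qed
qed

end

lemma all_option_index:
  "(\<forall>i. P i) \<longleftrightarrow> P (index_of_option None) \<and> (\<forall>j. P (index_of_option (Some j)))"
  by (metis option.exhaust option_of_index_inverse)

lemma bij_index_of_option: "bij index_of_option"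
  by (metis bij_betw_def inj_on_def index_of_option_inject surjI option_of_index_inverse iso_tuple_UNIV_I)

lemma sum_option_index:
  "(\<Sum>i\<in>UNIV. h i) = h (index_of_option None) + (\<Sum>j\<in>UNIV. h (index_of_option (Some j)))"
  for h :: "'a::finite option_index \<Rightarrow> 'b::comm_monoid_add"
  by (simp add: sum.reindex_bij_betw[OF bij_index_of_option, symmetric] UNIV_option_conv sum.reindex)

lemma prod_option_index:
  "(\<Prod>i\<in>UNIV. h i) = h (index_of_option None) * (\<Prod>j\<in>UNIV. h (index_of_option (Some j)))"
  for h :: "'a::finite option_index \<Rightarrow> 'b::comm_monoid_mult"
  by (simp add: prod.reindex_bij_betw[OF bij_index_of_option, symmetric] UNIV_option_conv prod.reindex)

definition cart_of_pair :: "real \<times> (real^'m) \<Rightarrow> real^'m::finite option_index" where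
  "cart_of_pair x = (\<chi> i. case option_of_index i of None \<Rightarrow> fst x | Some j \<Rightarrow> snd x $ j)"

definition pair_of_cart :: "real^'m::finite option_index \<Rightarrow> real \<times> (real^'m)" where
  "pair_of_cart v = (v $ index_of_option None, \<chi> j. v $ index_of_option (Some j))"

lemma cart_of_pair_component [simp]:
  "cart_of_pair x $ index_of_option None = fst x"
  "cart_of_pair x $ index_of_option (Some j) = snd x $ j"
  by (simp_all add: cart_of_pair_def index_of_option_inverse)

lemma pair_of_cart_of_pair [simp]: "pair_of_cart (cart_of_pair x) = x"
  by (simp add: pair_of_cart_def)

lemma cart_of_pair_of_cart [simp]: "cart_of_pair (pair_of_cart v) = v"
  by (simp add: vec_eq_iff all_option_index[of "\<lambda>i. cart_of_pair (pair_of_cart v) $ i = v $ i"])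
     (simp add: pair_of_cart_def)

lemma linear_cart_of_pair: "linear cart_of_pair"
proof (rule linearI)
  fix x y :: "real \<times> (real^'m)" and c :: real
  show "cart_of_pair (x + y) = cart_of_pair x + cart_of_pair y"
    unfolding vec_eq_iff by (subst all_option_index) simp
  show "cart_of_pair (c *\<^sub>R x) = c *\<^sub>R cart_of_pair x"
    unfolding vec_eq_iff by (subst all_option_index) simp
qed

lemma linear_pair_of_cart: "linear pair_of_cart"
  by (rule linearI) (simp_all add: pair_of_cart_def vec_eq_iff)

lemma norm_cart_of_pair [simp]: "norm (cart_of_pair x) = norm x"
  by (simp add: norm_eq_sqrt_inner inner_vec_def sum_option_index inner_prod_def)

lemma continuous_on_cart_of_pair: "continuous_on S cart_of_pair"
  using linear_cart_of_pair by (auto intro: linear_continuous_on linear_conv_bounded_linear[THEN iffD1])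

lemma continuous_on_pair_of_cart: "continuous_on S pair_of_cart"
  using linear_pair_of_cart by (auto intro: linear_continuous_on linear_conv_bounded_linear[THEN iffD1])

lemma cart_of_pair_image_eq_vimage: "cart_of_pair ` S = pair_of_cart -` S"
  by (auto simp: image_iff) (metis cart_of_pair_of_cart)

lemma cart_of_pair_vimage_box:
  fixes l u :: "real^'m::finite option_index"
  shows "cart_of_pair -` box l u = {l $ index_of_option None <..< u $ index_of_option None} \<times>
     box (\<chi> j. l $ index_of_option (Some j)) (\<chi> j. u $ index_of_option (Some j))"
proof (rule set_eqI)
  fix x :: "real \<times> (real^'m)"
  show "x \<in> cart_of_pair -` box l u \<longleftrightarrow> x \<in> {l $ index_of_option None <..< u $ index_of_option None} \<times>
     box (\<chi> j. l $ index_of_option (Some j)) (\<chi> j. u $ index_of_option (Some j))"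
    unfolding vimage_eq mem_box_cart mem_Times_iff by (subst all_option_index) (cases x, simp)
qed

lemma emeasure_box_cart:
  fixes l u :: "real^'n"
  assumes "\<And>i. l $ i \<le> u $ i"
  shows "emeasure lborel (box l u) = ennreal (\<Prod>i\<in>UNIV. u $ i - l $ i)"
proof -
  have "emeasure lborel (box l u) = ennreal (\<Prod>b\<in>Basis. (u - l) \<bullet> b)"
    by (rule emeasure_lborel_box) (use assms in \<open>auto simp: Basis_vec_def cart_eq_inner_axis[symmetric]\<close>)
  also have "(\<Prod>b\<in>Basis. (u - l) \<bullet> b) = (\<Prod>i\<in>UNIV. u $ i - l $ i)"
    by (simp add: Basis_vec_def cart_eq_inner_axis axis_eq_axis prod.UNION_disjoint inner_diff_left)
  finally show ?thesis .
qed

lemma distr_lborel_cart_of_pair: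
  "distr lborel borel cart_of_pair = (lborel :: (real^'m::finite option_index) measure)"
proof (rule lborel_eqI[symmetric])
  fix l u :: "real^'m option_index"
  assume lu_Basis: "\<And>b. b \<in> Basis \<Longrightarrow> l \<bullet> b \<le> u \<bullet> b"
  have lu: "l $ i \<le> u $ i" for i
    using lu_Basis[of "axis i 1"] by (auto simp: Basis_vec_def cart_eq_inner_axis[symmetric])
  have meas: "cart_of_pair \<in> borel_measurable (lborel :: (real \<times> (real^'m)) measure)"
    by (simp add: measurable_lborel1 borel_measurable_continuous_onI continuous_on_cart_of_pair)
  have "emeasure (distr lborel borel cart_of_pair) (box l u)
      = emeasure (lborel \<Otimes>\<^sub>M lborel) (cart_of_pair -` box l u)"
    by (simp add: emeasure_distr[OF meas] lborel_prod)
  also have "\<dots> = ennreal (u $ index_of_option None - l $ index_of_option None) *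
                   ennreal (\<Prod>j\<in>UNIV. u $ index_of_option (Some j) - l $ index_of_option (Some j))"
    unfolding cart_of_pair_vimage_box using lu
    by (subst lborel.emeasure_pair_measure_Times) (auto simp: emeasure_box_cart)
  also have "\<dots> = ennreal (\<Prod>i\<in>UNIV. u $ i - l $ i)"
    using lu by (simp add: prod_option_index[of "\<lambda>i. u $ i - l $ i"] ennreal_mult prod_nonneg)
  also have "\<dots> = (\<Prod>b\<in>Basis. (u - l) \<bullet> b)"
    by (simp add: Basis_vec_def cart_eq_inner_axis axis_eq_axis prod.UNION_disjoint inner_diff_left)
  finally show "emeasure (distr lborel borel cart_of_pair) (box l u) = (\<Prod>b\<in>Basis. (u - l) \<bullet> b)" .
qed simp

lemma sets_borel_cart_of_pair_image:
  "S \<in> sets borel \<Longrightarrow> cart_of_pair ` S \<in> sets borel"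
  unfolding cart_of_pair_image_eq_vimage
  using measurable_sets[OF borel_measurable_continuous_onI[OF continuous_on_pair_of_cart]] by simp

lemma emeasure_cart_of_pair_image:
  fixes S :: "(real \<times> (real^'m::finite)) set"
  assumes "S \<in> sets borel"
  shows "emeasure lborel (cart_of_pair ` S) = emeasure lborel S"
proof -
  have meas: "cart_of_pair \<in> borel_measurable (lborel :: (real \<times> (real^'m)) measure)"
    by (simp add: measurable_lborel1 borel_measurable_continuous_onI continuous_on_cart_of_pair)
  have "emeasure lborel (cart_of_pair ` S)
      = emeasure (distr lborel borel cart_of_pair) (cart_of_pair ` S)"
    by (simp add: distr_lborel_cart_of_pair)
  also have "\<dots> = emeasure lborel (cart_of_pair -` cart_of_pair ` S)"
    using emeasure_distr[OF meas sets_borel_cart_of_pair_image[OF assms]] by simp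
  also have "cart_of_pair -` cart_of_pair ` S = S"
    by (auto simp: image_iff) (metis pair_of_cart_of_pair)
  finally show ?thesis .
qed

lemma dist_cart_of_pair [simp]: "dist (cart_of_pair x) (cart_of_pair y) = dist x y"
  by (simp add: dist_norm linear_diff[OF linear_cart_of_pair, symmetric])

lemma dist_pair_of_cart [simp]: "dist (pair_of_cart x) (pair_of_cart y) = dist x y"
  by (metis cart_of_pair_of_cart dist_cart_of_pair)

lemma rigid_inj: "rigid f \<Longrightarrow> inj f"
  unfolding rigid_def inj_def by (metis dist_eq_0_iff)

lemma continuous_on_rigid: "rigid f \<Longrightarrow> continuous_on S f"
  unfolding rigid_def continuous_on_iff by metis

lemma orthogonal_transformation_rigid:
  fixes f :: "'a::real_inner \<Rightarrow> 'a"
  shows "rigid f \<Longrightarrow> orthogonal_transformation (\<lambda>x. f x - f 0)"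
  unfolding orthogonal_transformation_isometry rigid_def by (simp add: dist_norm)

lemma rigid_image_eq_translation:
  fixes f :: "'a::zero \<Rightarrow> 'b::ab_group_add"
  shows "f ` S = (+) (f 0) ` ((\<lambda>x. f x - f 0) ` S)"
  by (simp add: image_image)

lemma bij_rigid:
  fixes f :: "'a::euclidean_space \<Rightarrow> 'a"
  assumes "rigid f"
  shows "bij f"
proof -
  have "surj (\<lambda>x. f x - f 0)"
    using orthogonal_transformation_bij[OF orthogonal_transformation_rigid[OF assms]] bij_is_surj by blast
  then have "surj f"
    by (metis (no_types, lifting) diff_add_cancel surj_def)
  then show ?thesis using rigid_inj[OF assms] by (simp add: bij_def)
qed

lemma rigid_image_eq_vimage_inv:
  fixes f :: "'a::euclidean_space \<Rightarrow> 'a"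
  assumes "rigid f"
  shows "rigid (inv f)" "f ` S = inv f -` S"
proof -
  have bij: "bij f" by (rule bij_rigid[OF assms])
  show "rigid (inv f)"
    using assms unfolding rigid_def by (metis bij bij_inv_eq_iff)
  show "f ` S = inv f -` S"
    by (simp add: bij_vimage_eq_inv_image[OF bij_imp_bij_inv[OF bij]] inv_inv_eq[OF bij])
qed

lemma sets_borel_rigid_image:
  fixes f :: "'a::euclidean_space \<Rightarrow> 'a"
  assumes "rigid f" "S \<in> sets borel"
  shows "f ` S \<in> sets borel"
  using measurable_sets[OF borel_measurable_continuous_onI[OF continuous_on_rigid] assms(2)]
    rigid_image_eq_vimage_inv[OF assms(1)] by simp

lemma open_rigid_image:
  fixes f :: "'a::euclidean_space \<Rightarrow> 'a"
  assumes "rigid f" "open S"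
  shows "open (f ` S)"
  using continuous_on_rigid[of "inv f" UNIV] rigid_image_eq_vimage_inv[OF assms(1)] assms(2)
  by (simp add: continuous_on_open_vimage)

lemma
  fixes f :: "real^'n::{finite,wellorder} \<Rightarrow> real^'n::_"
  assumes "rigid f" "S \<in> lmeasurable"
  shows lmeasurable_rigid_image: "f ` S \<in> lmeasurable"
    and measure_rigid_image: "measure lebesgue (f ` S) = measure lebesgue S"
  using measurable_orthogonal_image[OF orthogonal_transformation_rigid[OF assms(1)] assms(2)]
    measure_orthogonal_image[OF orthogonal_transformation_rigid[OF assms(1)] assms(2)]
  unfolding rigid_image_eq_translation[of f S] by (simp_all add: measurable_translation measure_translation)

lemma emeasure_rigid_image:
  fixes f :: "real \<times> (real^'m::finite) \<Rightarrow> real \<times> (real^'m)"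
  assumes f: "rigid f" and S: "S \<in> sets borel" "bounded S"
  shows "emeasure lborel (f ` S) = emeasure lborel S"
proof -
  define F where "F = cart_of_pair \<circ> f \<circ> pair_of_cart"
  have "rigid F" using f unfolding F_def rigid_def by (metis comp_apply dist_cart_of_pair dist_pair_of_cart)
  have image: "cart_of_pair ` f ` S = F ` cart_of_pair ` S"
    by (simp add: F_def image_comp comp_def)
  have "cart_of_pair ` S \<in> lmeasurable"
    using sets_borel_cart_of_pair_image[OF S(1)] bounded_linear_image[OF S(2)] linear_cart_of_pair
    by (intro bounded_set_imp_lmeasurable) (auto simp: linear_conv_bounded_linear)
  then have "F ` cart_of_pair ` S \<in> lmeasurable"
    by (rule lmeasurable_rigid_image[OF \<open>rigid F\<close>])
  have "emeasure lborel (f ` S) = emeasure lborel (cart_of_pair ` f ` S)"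
    using sets_borel_rigid_image[OF f S(1)] by (simp add: emeasure_cart_of_pair_image)
  also have "\<dots> = emeasure lebesgue (F ` cart_of_pair ` S)"
    using sets_borel_rigid_image[OF f S(1)] by (simp add: image[symmetric] sets_borel_cart_of_pair_image)
  also have "\<dots> = measure lebesgue (cart_of_pair ` S)"
    using \<open>F ` cart_of_pair ` S \<in> lmeasurable\<close> \<open>cart_of_pair ` S \<in> lmeasurable\<close>
    by (simp add: emeasure_eq_measure2 measure_rigid_image[OF \<open>rigid F\<close>])
  also have "\<dots> = emeasure lebesgue (cart_of_pair ` S)"
    using \<open>cart_of_pair ` S \<in> lmeasurable\<close> by (rule emeasure_eq_measure2[symmetric])
  also have "\<dots> = emeasure lborel S"
    using S(1) by (simp add: sets_borel_cart_of_pair_image emeasure_cart_of_pair_image)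
  finally show ?thesis .
qed

section \<open>Geometry of essential tubes\<close>

lemma infdist_frontier_pos:
  assumes "open \<Omega>" "x \<in> \<Omega>" "frontier \<Omega> \<noteq> {}"
  shows "0 < infdist x (frontier \<Omega>)"
proof -
  have "x \<notin> frontier \<Omega>" using assms by (auto simp: frontier_def interior_open)
  then show ?thesis
    using in_closed_iff_infdist_zero[OF frontier_closed assms(3)] infdist_nonneg
    by (metis less_eq_real_def)
qed

lemma path_first_exit:
  fixes g :: "real \<Rightarrow> 'a"
  assumes "g 0 \<in> A" "g 1 \<notin> A"
  obtains \<sigma> where "\<sigma> \<in> {0..1}" "\<And>\<tau>. \<tau> \<in> {0..<\<sigma>} \<Longrightarrow> g \<tau> \<in> A"
    "\<And>\<epsilon>. 0 < \<epsilon> \<Longrightarrow> \<exists>\<tau>\<in>{\<sigma>..1}. \<tau> < \<sigma> + \<epsilon> \<and> g \<tau> \<notin> A"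
proof -
  define S where "S = {\<tau>\<in>{0..1}. g \<tau> \<notin> A}"
  have "1 \<in> S" "bdd_below S" using assms(2) by (auto simp: S_def intro: bdd_belowI[of _ 0])
  define \<sigma> where "\<sigma> = Inf S"
  have "\<sigma> \<in> {0..1}"
    unfolding \<sigma>_def using \<open>1 \<in> S\<close> \<open>bdd_below S\<close>
    by (auto intro: cInf_greatest cInf_lower simp: S_def)
  moreover have "g \<tau> \<in> A" if "\<tau> \<in> {0..<\<sigma>}" for \<tau>
    using that \<open>\<sigma> \<in> {0..1}\<close> cInf_lower[OF _ \<open>bdd_below S\<close>, of \<tau>] by (force simp: \<sigma>_def S_def)
  moreover have "\<exists>\<tau>\<in>{\<sigma>..1}. \<tau> < \<sigma> + \<epsilon> \<and> g \<tau> \<notin> A" if "0 < \<epsilon>" for \<epsilon>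
  proof -
    have "Inf S < \<sigma> + \<epsilon>" using that by (simp add: \<sigma>_def)
    then obtain \<tau> where "\<tau> \<in> S" "\<tau> < \<sigma> + \<epsilon>"
      using cInf_lessD[of S] \<open>1 \<in> S\<close> by blast
    moreover have "\<sigma> \<le> \<tau>" unfolding \<sigma>_def by (rule cInf_lower[OF \<open>\<tau> \<in> S\<close> \<open>bdd_below S\<close>])
    ultimately show ?thesis by (auto simp: S_def)
  qed
  ultimately show ?thesis using that by blast
qed

lemma essential_tubeD:
  fixes \<Omega> :: "(real \<times> (real^'m::finite)) set"
  assumes "essential_tube \<Omega> f l r c \<Omega>T"
  shows "0 < l" "0 < r" "0 < c" "rigid f" "\<Omega>T \<in> components (tube f l r \<inter> \<Omega>)"
    "\<Omega>T \<inter> tube_wall f l r = {}"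
    "\<And>t. t \<in> {0..l} \<Longrightarrow> c * measure lebesgue (cball (0::real^'m) r) \<le> measure lebesgue (tube_slice f r \<Omega>T t)"
  using assms unfolding essential_tube_def by auto

lemma compact_tube: "rigid f \<Longrightarrow> compact (tube f l r)"
  unfolding tube_def
  by (intro compact_continuous_image continuous_on_rigid compact_Times compact_Icc compact_cball)

context
  fixes \<Omega> :: "(real \<times> (real^'m::finite)) set" and f l r c \<Omega>T
  assumes essential: "essential_tube \<Omega> f l r c \<Omega>T"
begin

lemma essential_tube_component_subset: "\<Omega>T \<subseteq> tube f l r" "\<Omega>T \<subseteq> \<Omega>"
  using in_components_subset[OF essential_tubeD(5)[OF essential]] by auto

lemma essential_tube_component_maximal:
  assumes "connected Q" "Q \<subseteq> tube f l r" "Q \<subseteq> \<Omega>" "Q \<inter> \<Omega>T \<noteq> {}"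
  shows "Q \<subseteq> \<Omega>T"
  using components_maximal[OF essential_tubeD(5)[OF essential] assms(1)] assms(2-4) by blast

lemma sets_borel_essential_tube_component:
  assumes "open \<Omega>"
  shows "\<Omega>T \<in> sets borel"
proof -
  obtain F where F: "closed F" "\<Omega>T = (tube f l r \<inter> \<Omega>) \<inter> F"
    using closedin_component[OF essential_tubeD(5)[OF essential]] unfolding closedin_closed by blast
  have "closed (tube f l r)"
    using compact_tube[OF essential_tubeD(4)[OF essential]] compact_imp_closed by blast
  then show ?thesis unfolding F(2) using F(1) assms by (intro sets.Int borel_closed borel_open) auto
qed

lemma essential_tube_near_frontier:
  assumes "\<zeta> \<in> \<Omega>T"
  obtains w where "w \<in> frontier \<Omega>" "dist \<zeta> w \<le> 2 * r"
proof -
  note tube = essential_tubeD[OF essential]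
  obtain t y where ty: "\<zeta> = f (t, y)" "t \<in> {0..l}" "norm y \<le> r"
    using assms essential_tube_component_subset unfolding tube_def by auto
  obtain i :: 'm where True by simp
  define y' where "y' = r *\<^sub>R axis i (1::real)"
  have "norm y' = r" using tube(2) by (simp add: y'_def)
  \<comment> \<open>the segment from \<open>y\<close> to the wall inside the slice through \<open>\<zeta>\<close> must leave \<open>\<Omega>\<close>\<close>
  define Q where "Q = (\<lambda>v. f (t, v)) ` closed_segment y y'"
  have "closed_segment y y' \<subseteq> cball 0 r"
    by (rule closed_segment_subset) (use ty \<open>norm y' = r\<close> in auto)
  then have "Q \<subseteq> tube f l r" unfolding Q_def tube_def using ty by auto
  have "connected Q" unfolding Q_def
    by (intro connected_continuous_image connected_segment
        continuous_on_compose2[OF continuous_on_rigid[OF tube(4)]] continuous_intros) auto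
  have "\<zeta> \<in> Q" "f (t, y') \<in> Q" unfolding Q_def ty by auto
  have "f (t, y') \<in> tube_wall f l r" unfolding tube_wall_def using ty \<open>norm y' = r\<close> by auto
  then have "\<not> Q \<subseteq> \<Omega>"
    using essential_tube_component_maximal[OF \<open>connected Q\<close> \<open>Q \<subseteq> tube f l r\<close>]
      \<open>\<zeta> \<in> Q\<close> \<open>f (t, y') \<in> Q\<close> assms tube(6) by blast
  moreover have "Q \<inter> \<Omega> \<noteq> {}" using \<open>\<zeta> \<in> Q\<close> assms essential_tube_component_subset by blast
  ultimately obtain v where v: "v \<in> closed_segment y y'" "f (t, v) \<in> frontier \<Omega>"
    using connected_Int_frontier[OF \<open>connected Q\<close>] unfolding Q_def by blast
  have "dist \<zeta> (f (t, v)) = dist y v" unfolding ty using tube(4) by (simp add: rigid_def dist_Pair_Pair)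
  also have "\<dots> \<le> dist y y'" using dist_in_closed_segment[OF v(1)] by (simp add: dist_commute)
  also have "\<dots> \<le> 2 * r" using ty \<open>norm y' = r\<close> norm_triangle_ineq4[of y y'] by (simp add: dist_norm)
  finally show ?thesis using that v(2) by blast
qed

lemma infdist_frontier_essential_tube:
  assumes "open \<Omega>" "\<zeta> \<in> \<Omega>T"
  shows "frontier \<Omega> \<noteq> {}" "0 < infdist \<zeta> (frontier \<Omega>)" "infdist \<zeta> (frontier \<Omega>) \<le> 2 * r"
proof -
  obtain w where w: "w \<in> frontier \<Omega>" "dist \<zeta> w \<le> 2 * r"
    using essential_tube_near_frontier[OF assms(2)] by blast
  then show "frontier \<Omega> \<noteq> {}" by blast
  show "0 < infdist \<zeta> (frontier \<Omega>)"
    using infdist_frontier_pos[OF assms(1) _ \<open>frontier \<Omega> \<noteq> {}\<close>] assms(2) essential_tube_component_subset by blast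
  show "infdist \<zeta> (frontier \<Omega>) \<le> 2 * r"
    using infdist_le[OF w(1), of \<zeta>] w(2) by simp
qed

lemma essential_tube_path_closure:
  fixes a b :: real
  assumes g: "continuous_on {a..b} g" "g ` {a..b} \<subseteq> \<Omega>" and "a < b" and inside: "g ` {a..<b} \<subseteq> \<Omega>T"
  shows "g ` {a..b} \<subseteq> \<Omega>T"
proof (rule essential_tube_component_maximal)
  have "closed (tube f l r)"
    using compact_tube[OF essential_tubeD(4)[OF essential]] compact_imp_closed by blast
  moreover have "g ` {a..<b} \<subseteq> tube f l r" using inside essential_tube_component_subset by blast
  moreover have "closure {a..<b} = {a..b}" using \<open>a < b\<close> by simp
  ultimately show "g ` {a..b} \<subseteq> tube f l r"
    using image_closure_subset[of "{a..<b}" g "tube f l r"] g(1) by simp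
  show "connected (g ` {a..b})" by (intro connected_continuous_image g(1) connected_Icc)
  have "g a \<in> g ` {a..b} \<inter> \<Omega>T" using inside \<open>a < b\<close> by (auto simp: image_subset_iff)
  then show "g ` {a..b} \<inter> \<Omega>T \<noteq> {}" by blast
qed (use g in auto)

lemma essential_tube_core_neighbourhood:
  fixes \<sigma> :: real
  assumes g: "continuous_on {0..1} g" "g ` {0..1} \<subseteq> \<Omega>"
    and \<sigma>: "\<sigma> \<in> {0..1}" "g \<sigma> \<in> \<Omega>T" "g \<sigma> \<in> f ` ({0<..<l} \<times> ball 0 r)"
  obtains \<epsilon> where "\<epsilon> > 0" "\<And>\<tau>. \<tau> \<in> {\<sigma>..1} \<Longrightarrow> \<tau> < \<sigma> + \<epsilon> \<Longrightarrow> g \<tau> \<in> \<Omega>T"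
proof -
  define U where "U = f ` ({0<..<l} \<times> ball 0 r)"
  have "open U"
    unfolding U_def by (intro open_rigid_image[OF essential_tubeD(4)[OF essential]] open_Times) auto
  then obtain \<delta> where "\<delta> > 0" "ball (g \<sigma>) \<delta> \<subseteq> U"
    using \<sigma>(3) open_contains_ball unfolding U_def by blast
  moreover obtain \<epsilon> where "\<epsilon> > 0" "\<And>\<tau>. \<tau> \<in> {0..1} \<Longrightarrow> dist \<tau> \<sigma> < \<epsilon> \<Longrightarrow> dist (g \<tau>) (g \<sigma>) < \<delta>"
    using g(1) \<open>\<delta> > 0\<close> \<sigma>(1) unfolding continuous_on_iff by metis
  ultimately have near: "g ` {\<sigma>..\<tau>} \<subseteq> U" if "\<tau> \<in> {\<sigma>..1}" "\<tau> < \<sigma> + \<epsilon>" for \<tau>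
    using \<sigma>(1) that by (force simp: dist_real_def dist_commute)
  have "g \<tau> \<in> \<Omega>T" if \<tau>: "\<tau> \<in> {\<sigma>..1}" "\<tau> < \<sigma> + \<epsilon>" for \<tau>
  proof -
    have "U \<subseteq> tube f l r" unfolding U_def tube_def by auto
    moreover have "g ` {\<sigma>..\<tau>} \<inter> \<Omega>T \<noteq> {}" using \<tau>(1) \<sigma>(2) by force
    moreover have "continuous_on {\<sigma>..\<tau>} g" "g ` {\<sigma>..\<tau>} \<subseteq> \<Omega>"
      using g \<sigma>(1) \<tau>(1) by (auto intro: continuous_on_subset)
    ultimately have "g ` {\<sigma>..\<tau>} \<subseteq> \<Omega>T"
      using near[OF \<tau>]
      by (intro essential_tube_component_maximal connected_continuous_image connected_Icc) auto
    then show ?thesis using \<tau>(1) by (auto simp: image_subset_iff)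
  qed
  then show ?thesis using \<open>\<epsilon> > 0\<close> that by blast
qed

lemma essential_tube_exit_point:
  assumes g: "path g" "path_image g \<subseteq> \<Omega>" "g 0 \<in> \<Omega>T" "g 1 \<notin> \<Omega>T"
  obtains \<sigma> a y where "\<sigma> \<in> {0..1}" "g ` {0..\<sigma>} \<subseteq> \<Omega>T" "a = 0 \<or> a = l" "g \<sigma> = f (a, y)"
proof -
  have cont: "continuous_on {a..b} g" if "0 \<le> a" "b \<le> 1" for a b
    using g(1) that unfolding path_def by (auto intro: continuous_on_subset)
  have in_\<Omega>: "g ` {a..b} \<subseteq> \<Omega>" if "0 \<le> a" "b \<le> 1" for a b
    using g(2) that unfolding path_image_def by auto
  obtain \<sigma> where \<sigma>: "\<sigma> \<in> {0..1}" "\<And>\<tau>. \<tau> \<in> {0..<\<sigma>} \<Longrightarrow> g \<tau> \<in> \<Omega>T"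
    and leaves: "\<And>\<epsilon>. 0 < \<epsilon> \<Longrightarrow> \<exists>\<tau>\<in>{\<sigma>..1}. \<tau> < \<sigma> + \<epsilon> \<and> g \<tau> \<notin> \<Omega>T"
    using path_first_exit[of g \<Omega>T] g(3,4) by blast
  have upto: "g ` {0..\<sigma>} \<subseteq> \<Omega>T"
  proof (cases "\<sigma> = 0")
    case False
    then show ?thesis using \<sigma> cont in_\<Omega> by (intro essential_tube_path_closure) auto
  qed (use g(3) in auto)
  then have "g \<sigma> \<in> \<Omega>T" using \<sigma>(1) by auto
  then obtain a y where ay: "g \<sigma> = f (a, y)" "a \<in> {0..l}" "norm y \<le> r"
    using essential_tube_component_subset unfolding tube_def by auto
  have "norm y \<noteq> r"
    using \<open>g \<sigma> \<in> \<Omega>T\<close> essential_tubeD(6)[OF essential] ay unfolding tube_wall_def by auto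
  have "g \<sigma> \<notin> f ` ({0<..<l} \<times> ball 0 r)"
  proof
    assume "g \<sigma> \<in> f ` ({0<..<l} \<times> ball 0 r)"
    then obtain \<epsilon> where "\<epsilon> > 0" "\<And>\<tau>. \<tau> \<in> {\<sigma>..1} \<Longrightarrow> \<tau> < \<sigma> + \<epsilon> \<Longrightarrow> g \<tau> \<in> \<Omega>T"
      using essential_tube_core_neighbourhood[OF g(1)[unfolded path_def] g(2)[unfolded path_image_def]
          \<sigma>(1) \<open>g \<sigma> \<in> \<Omega>T\<close>] by blast
    then show False using leaves by blast
  qed
  then have "a = 0 \<or> a = l" using ay \<open>norm y \<noteq> r\<close> by force
  then show ?thesis using that \<sigma>(1) upto ay(1) by blast
qed

end

section \<open>Quasihyperbolic distance from an essential tube\<close>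

definition qh_paths :: "'a::euclidean_space set \<Rightarrow> 'a \<Rightarrow> 'a \<Rightarrow> (real \<Rightarrow> 'a) set" where
  "qh_paths \<Omega> z z0 =
     {g. rectifiable_path g \<and> path_image g \<subseteq> \<Omega> \<and> pathstart g = z \<and> pathfinish g = z0}"

definition qh_length :: "'a::euclidean_space set \<Rightarrow> (real \<Rightarrow> 'a) \<Rightarrow> ennreal" where
  "qh_length \<Omega> g = arclength_integral (\<lambda>\<zeta>. 1 / infdist \<zeta> (frontier \<Omega>)) g"

lemma qh_dist_eq_INF: "qh_dist \<Omega> z z0 = enn2real (INF g\<in>qh_paths \<Omega> z z0. qh_length \<Omega> g)"
  by (simp add: qh_dist_def qh_paths_def qh_length_def)

lemma qh_length_finite:
  assumes "open \<Omega>" "frontier \<Omega> \<noteq> {}" "rectifiable_path g" "path_image g \<subseteq> \<Omega>"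
  shows "qh_length \<Omega> g < top"
proof -
  have "path g" using assms(3) by (simp add: rectifiable_path_iff_bdd_above)
  \<comment> \<open>the compact trace of \<open>g\<close> keeps a positive distance \<open>m\<close> from the boundary\<close>
  obtain x0 where x0: "x0 \<in> path_image g"
    "\<And>y. y \<in> path_image g \<Longrightarrow> infdist x0 (frontier \<Omega>) \<le> infdist y (frontier \<Omega>)"
  proof -
    have "continuous_on (path_image g) (\<lambda>y. infdist y (frontier \<Omega>))"
      by (intro continuous_on_infdist continuous_on_id)
    from continuous_attains_inf[OF compact_path_image[OF \<open>path g\<close>] path_image_nonempty this]
    show ?thesis using that by blast
  qed
  define m where "m = infdist x0 (frontier \<Omega>)"
  have "0 < m"
    unfolding m_def using infdist_frontier_pos[OF assms(1) _ assms(2)] x0(1) assms(4) by blast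
  have "qh_length \<Omega> g \<le> ennreal (1 / m * curve_variation g 0 1)"
    unfolding qh_length_def
  proof (rule arclength_integral_upper_bound[OF assms(3)])
    show "0 \<le> 1 / m" using \<open>0 < m\<close> by simp
    fix \<tau> :: real assume "\<tau> \<in> {0<..1}"
    then have "g \<tau> \<in> path_image g" unfolding path_image_def by auto
    then show "1 / infdist (g \<tau>) (frontier \<Omega>) \<le> 1 / m"
      using x0(2) \<open>0 < m\<close> unfolding m_def by (intro frac_le) auto
  qed
  then show ?thesis using le_less_trans by fastforce
qed

lemma qh_dist_lower_bound:
  fixes \<Omega> :: "'a::euclidean_space set"
  assumes "open \<Omega>" "connected \<Omega>" "frontier \<Omega> \<noteq> {}" "z \<in> \<Omega>" "z0 \<in> \<Omega>" "0 \<le> b"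
    and bound: "\<And>g. g \<in> qh_paths \<Omega> z z0 \<Longrightarrow> ennreal b \<le> qh_length \<Omega> g"
  shows "b \<le> qh_dist \<Omega> z z0"
proof -
  obtain g where g: "g \<in> qh_paths \<Omega> z z0"
    using open_connected_rectifiable_path[OF assms(1,2,4,5)] unfolding qh_paths_def by blast
  then have "qh_length \<Omega> g < top"
    using qh_length_finite[OF assms(1,3)] unfolding qh_paths_def by blast
  then have "(INF g\<in>qh_paths \<Omega> z z0. qh_length \<Omega> g) < top"
    using g by (meson INF_lower le_less_trans)
  moreover have "ennreal b \<le> (INF g\<in>qh_paths \<Omega> z z0. qh_length \<Omega> g)"
    by (rule INF_greatest) (rule bound)
  ultimately show ?thesis
    unfolding qh_dist_eq_INF using enn2real_mono[of "ennreal b"] assms(6) by fastforce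
qed

context
  fixes \<Omega> :: "(real \<times> (real^'m::finite)) set" and f l r c \<Omega>T
  assumes essential: "essential_tube \<Omega> f l r c \<Omega>T" and "open \<Omega>"
begin

lemma qh_length_essential_tube:
  assumes z: "f (t, y) \<in> \<Omega>T" "t \<in> {0..l}" and "z0 \<notin> \<Omega>T" and g: "g \<in> qh_paths \<Omega> (f (t, y)) z0"
  shows "ennreal (min t (l - t) / (2 * r)) \<le> qh_length \<Omega> g"
proof -
  note tube = essential_tubeD[OF essential]
  have "rectifiable_path g" "path g" "path_image g \<subseteq> \<Omega>" "g 0 = f (t, y)" "g 1 = z0"
    using g by (auto simp: qh_paths_def rectifiable_path_iff_bdd_above pathstart_def pathfinish_def)
  then obtain \<sigma> a y' where \<sigma>: "\<sigma> \<in> {0..1}" "g ` {0..\<sigma>} \<subseteq> \<Omega>T" "a = 0 \<or> a = l" "g \<sigma> = f (a, y')"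
    using essential_tube_exit_point[OF essential, of g] z(1) \<open>z0 \<notin> \<Omega>T\<close> by metis
  have "1 / (2 * r) \<le> 1 / infdist (g \<tau>) (frontier \<Omega>)" if "\<tau> \<in> {0<..\<sigma>}" for \<tau>
  proof -
    have "g \<tau> \<in> \<Omega>T" using \<sigma>(2) that by auto
    then show ?thesis
      using infdist_frontier_essential_tube[OF essential \<open>open \<Omega>\<close>] by (intro frac_le) auto
  qed
  then have "ennreal (1 / (2 * r) * dist (g \<sigma>) (g 0)) \<le> qh_length \<Omega> g"
    unfolding qh_length_def using \<sigma>(1) tube(2)
    by (intro arclength_integral_lower_bound[OF \<open>rectifiable_path g\<close>]) auto
  moreover have "min t (l - t) \<le> dist (g \<sigma>) (g 0)"
  proof -
    have "dist (g \<sigma>) (g 0) = dist (a, y') (t, y)"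
      using \<sigma>(4) \<open>g 0 = f (t, y)\<close> tube(4) by (simp add: rigid_def)
    moreover have "dist a t \<le> dist (a, y') (t, y)" using dist_fst_le[of "(a, y')" "(t, y)"] by simp
    moreover have "min t (l - t) \<le> dist a t" using \<sigma>(3) z(2) by (auto simp: dist_real_def)
    ultimately show ?thesis by simp
  qed
  then have "min t (l - t) / (2 * r) \<le> 1 / (2 * r) * dist (g \<sigma>) (g 0)"
    using tube(2) by (simp add: divide_right_mono)
  ultimately show ?thesis using ennreal_leI order_trans by blast
qed

lemma qh_dist_essential_tube:
  assumes "connected \<Omega>" "f (t, y) \<in> \<Omega>T" "t \<in> {0..l}" "z0 \<in> \<Omega>" "z0 \<notin> \<Omega>T"
  shows "min t (l - t) / (2 * r) \<le> qh_dist \<Omega> (f (t, y)) z0"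
  using assms essential_tubeD(2)[OF essential] essential_tube_component_subset[OF essential]
    infdist_frontier_essential_tube(1)[OF essential \<open>open \<Omega>\<close> assms(2)]
  by (intro qh_dist_lower_bound qh_length_essential_tube \<open>open \<Omega>\<close>) auto

end

section \<open>Integral of the quasihyperbolic distance over an essential tube\<close>

definition cylinder_slab ::
    "(real \<times> (real^'m) \<Rightarrow> real \<times> (real^'m)) \<Rightarrow> real \<Rightarrow> (real \<times> (real^'m)) set
       \<Rightarrow> real \<Rightarrow> real \<Rightarrow> (real \<times> (real^'m)) set" where
  "cylinder_slab f r S \<alpha> \<beta> = {x. fst x \<in> {\<alpha>..\<beta>} \<and> norm (snd x) \<le> r \<and> f x \<in> S}"

lemma cylinder_slab_slice:
  "Pair t -` cylinder_slab f r S \<alpha> \<beta> = (if t \<in> {\<alpha>..\<beta>} then tube_slice f r S t else {})"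
  by (auto simp: cylinder_slab_def tube_slice_def)

lemma bounded_cylinder_slab: "bounded (cylinder_slab f r S \<alpha> \<beta>)"
  by (rule bounded_subset[of "{\<alpha>..\<beta>} \<times> cball 0 r"])
     (auto simp: cylinder_slab_def mem_Times_iff intro: bounded_Times)

lemma sets_borel_cylinder_slab:
  assumes "rigid f" "S \<in> sets borel"
  shows "cylinder_slab f r S \<alpha> \<beta> \<in> sets borel"
proof -
  have slab: "cylinder_slab f r S \<alpha> \<beta> = fst -` {\<alpha>..\<beta>} \<inter> snd -` cball 0 r \<inter> f -` S"
    by (auto simp: cylinder_slab_def)
  have "fst \<in> borel_measurable borel" "snd \<in> borel_measurable borel"
    by (intro borel_measurable_continuous_onI continuous_on_fst continuous_on_snd continuous_on_id)+
  moreover have "f \<in> borel_measurable borel"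
    by (intro borel_measurable_continuous_onI continuous_on_rigid[OF assms(1)])
  ultimately show ?thesis unfolding slab
    using measurable_sets[of fst borel borel "{\<alpha>..\<beta>}"] measurable_sets[of snd borel borel "cball 0 r"]
      measurable_sets[OF _ assms(2), of f borel] by (intro sets.Int) auto
qed

lemma emeasure_lborel_eq_measure:
  fixes X :: "'a::euclidean_space set"
  assumes "X \<in> sets borel" "bounded X"
  shows "emeasure lborel X = ennreal (measure lebesgue X)"
  using assms emeasure_bounded_finite[OF assms(2)] by (simp add: emeasure_eq_ennreal_measure)

lemma emeasure_cylinder_slab:
  fixes \<Omega> :: "(real \<times> (real^'m::finite)) set"
  assumes essential: "essential_tube \<Omega> f l r c \<Omega>T" and "open \<Omega>" and "0 \<le> \<alpha>" "\<alpha> \<le> \<beta>" "\<beta> \<le> l"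
  shows "ennreal (c * measure lebesgue (cball (0::real^'m) r) * (\<beta> - \<alpha>))
           \<le> emeasure lborel (cylinder_slab f r \<Omega>T \<alpha> \<beta>)"
proof -
  note tube = essential_tubeD[OF essential]
  let ?A = "cylinder_slab f r \<Omega>T \<alpha> \<beta>" and ?D = "measure lebesgue (cball (0::real^'m) r)"
  have A: "?A \<in> sets borel"
    by (intro sets_borel_cylinder_slab tube(4) sets_borel_essential_tube_component[OF essential \<open>open \<Omega>\<close>])
  have slice: "ennreal (c * ?D) * indicator {\<alpha>..\<beta>} t \<le> emeasure lborel (Pair t -` ?A)" for t
  proof (cases "t \<in> {\<alpha>..\<beta>}")
    case True
    have "Pair t -` ?A \<in> sets borel"
      using measurable_sets[OF borel_measurable_continuous_onI[of "Pair t"] A] by (simp add: continuous_intros)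
    moreover have "bounded (Pair t -` ?A)"
      by (rule bounded_subset[of "cball 0 r"]) (auto simp: cylinder_slab_def)
    moreover have "c * ?D \<le> measure lebesgue (Pair t -` ?A)"
      using True assms tube(7)[of t] by (simp add: cylinder_slab_slice)
    ultimately show ?thesis using True by (simp add: emeasure_lborel_eq_measure ennreal_leI)
  qed simp
  have "emeasure lborel ?A = emeasure (lborel \<Otimes>\<^sub>M lborel) ?A" by (simp add: lborel_prod)
  also have "\<dots> = (\<integral>\<^sup>+t. emeasure lborel (Pair t -` ?A) \<partial>lborel)"
    by (rule lborel.emeasure_pair_measure_alt) (unfold lborel_prod, use A in simp)
  also have "\<dots> \<ge> (\<integral>\<^sup>+t. ennreal (c * ?D) * indicator {\<alpha>..\<beta>} t \<partial>lborel)"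
    by (intro nn_integral_mono slice)
  also have "(\<integral>\<^sup>+t. ennreal (c * ?D) * indicator {\<alpha>..\<beta>} t \<partial>lborel) = ennreal (c * ?D * (\<beta> - \<alpha>))"
    using assms tube(3) by (simp add: nn_integral_cmult_indicator ennreal_mult)
  finally show ?thesis .
qed

lemma qh_dist_middle_of_essential_tube:
  fixes \<Omega> :: "(real \<times> (real^'m::finite)) set"
  assumes essential: "essential_tube \<Omega> f l r c \<Omega>T"
    and "open \<Omega>" "connected \<Omega>" "z0 \<in> \<Omega>" "z0 \<notin> \<Omega>T"
    and "z \<in> f ` cylinder_slab f r \<Omega>T (l / 4) (3 * l / 4)"
  shows "l / (8 * r) \<le> qh_dist \<Omega> z z0"
proof -
  note tube = essential_tubeD[OF essential]
  obtain t y where ty: "z = f (t, y)" "t \<in> {l/4..3*l/4}" "f (t, y) \<in> \<Omega>T"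
    using assms(6) unfolding cylinder_slab_def by auto
  have "l / (8 * r) \<le> min t (l - t) / (2 * r)"
    using ty(2) tube(2) by (auto simp: field_simps)
  also have "\<dots> \<le> qh_dist \<Omega> z z0"
    unfolding ty(1) using ty tube(1) assms(2-5) by (intro qh_dist_essential_tube[OF essential]) auto
  finally show ?thesis .
qed

lemma nn_integral_qh_dist_essential_tube:
  fixes \<Omega> :: "(real \<times> (real^'m::finite)) set"
  assumes essential: "essential_tube \<Omega> f l r c \<Omega>T"
    and "open \<Omega>" "connected \<Omega>" "z0 \<in> \<Omega>" "z0 \<notin> \<Omega>T" "0 \<le> s"
  shows "ennreal ((l / (8 * r)) powr s * (c * measure lebesgue (cball (0::real^'m) r) * (l / 2)))
           \<le> (\<integral>\<^sup>+ z\<in>\<Omega>T. ennreal (qh_dist \<Omega> z z0 powr s) \<partial>lebesgue)"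
proof -
  note tube = essential_tubeD[OF essential]
  define A where "A = cylinder_slab f r \<Omega>T (l / 4) (3 * l / 4)"
  define b where "b = l / (8 * r)"
  have A: "A \<in> sets borel" "bounded A"
    unfolding A_def
    by (intro sets_borel_cylinder_slab tube(4) sets_borel_essential_tube_component[OF essential \<open>open \<Omega>\<close>]
        bounded_cylinder_slab)+
  have "f ` A \<subseteq> \<Omega>T" by (auto simp: A_def cylinder_slab_def)
  have pointwise: "ennreal (b powr s) * indicator (f ` A) z \<le> ennreal (qh_dist \<Omega> z z0 powr s) * indicator \<Omega>T z"
    for z
  proof (cases "z \<in> f ` A")
    case True
    then have "b powr s \<le> qh_dist \<Omega> z z0 powr s"
      using qh_dist_middle_of_essential_tube[OF assms(1-5)] tube(1,2) \<open>0 \<le> s\<close>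
      by (intro powr_mono2) (auto simp: A_def b_def)
    then show ?thesis using True \<open>f ` A \<subseteq> \<Omega>T\<close> by (auto simp: ennreal_leI)
  qed simp
  have "ennreal (c * measure lebesgue (cball (0::real^'m) r) * (l / 2)) \<le> emeasure lborel A"
    using emeasure_cylinder_slab[OF essential \<open>open \<Omega>\<close>, of "l / 4" "3 * l / 4"] tube(1)
    by (simp add: A_def)
  then have "ennreal (b powr s) * ennreal (c * measure lebesgue (cball (0::real^'m) r) * (l / 2))
      \<le> ennreal (b powr s) * emeasure lborel A"
    by (rule mult_left_mono) simp
  then have "ennreal (b powr s * (c * measure lebesgue (cball (0::real^'m) r) * (l / 2)))
      \<le> ennreal (b powr s) * emeasure lborel A"
    by (simp only: ennreal_mult'[OF powr_ge_zero])
  also have "\<dots> = ennreal (b powr s) * emeasure lebesgue (f ` A)"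
    using emeasure_rigid_image[OF tube(4) A] sets_borel_rigid_image[OF tube(4) A(1)] by simp
  also have "\<dots> = (\<integral>\<^sup>+ z. ennreal (b powr s) * indicator (f ` A) z \<partial>lebesgue)"
    using sets_borel_rigid_image[OF tube(4) A(1)] by (intro nn_integral_cmult_indicator[symmetric]) simp
  also have "\<dots> \<le> (\<integral>\<^sup>+ z\<in>\<Omega>T. ennreal (qh_dist \<Omega> z z0 powr s) \<partial>lebesgue)"
    by (intro nn_integral_mono pointwise)
  finally show ?thesis unfolding b_def .
qed

lemma tube_bound_rearrange:
  fixes l r :: real
  assumes "0 < l" "0 < r"
  shows "(l / (8 * r)) powr s * (c * (\<kappa> * r ^ m) * (l / 2))
           = \<kappa> / (2 * 8 powr s) * c * r ^ (m + 1) * (l / r) powr (s + 1)"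
proof -
  have "(l / (8 * r)) powr s = (l / r) powr s / 8 powr s"
    by (simp add: powr_divide[symmetric] field_simps)
  moreover have "(l / r) powr (s + 1) = (l / r) powr s * (l / r)"
    using assms by (simp add: powr_add)
  ultimately show ?thesis using assms by (simp add: field_simps)
qed

theorem mainTheorem1:
  fixes s :: real
  assumes "1 \<le> s"
  shows "\<exists>C>0. \<forall>(\<Omega>::(real \<times> (real^'m)) set) f l r c \<Omega>T z0.
           open \<Omega> \<and> connected \<Omega> \<and> essential_tube \<Omega> f l r c \<Omega>T \<and> z0 \<in> \<Omega> \<and> z0 \<notin> \<Omega>T \<longrightarrow>
           (\<integral>\<^sup>+ z\<in>\<Omega>T. ennreal (qh_dist \<Omega> z z0 powr s) \<partial>lebesgue)
             \<ge> ennreal (C * c * r ^ (CARD('m) + 1) * (l / r) powr (s + 1))"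
proof -
  define \<kappa> where "\<kappa> = measure lebesgue (cball (0::real^'m) 1)"
  have "0 < \<kappa>" by (simp add: \<kappa>_def)
  show ?thesis
  proof (intro exI[of _ "\<kappa> / (2 * 8 powr s)"] conjI allI impI)
    show "0 < \<kappa> / (2 * 8 powr s)" using \<open>0 < \<kappa>\<close> by simp
    fix \<Omega> :: "(real \<times> (real^'m)) set" and f l r c \<Omega>T z0
    assume "open \<Omega> \<and> connected \<Omega> \<and> essential_tube \<Omega> f l r c \<Omega>T \<and> z0 \<in> \<Omega> \<and> z0 \<notin> \<Omega>T"
    then have hyps: "essential_tube \<Omega> f l r c \<Omega>T" "open \<Omega>" "connected \<Omega>" "z0 \<in> \<Omega>" "z0 \<notin> \<Omega>T"
      by auto
    have "ennreal ((l / (8 * r)) powr s * (c * measure lebesgue (cball (0::real^'m) r) * (l / 2)))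
        \<le> (\<integral>\<^sup>+ z\<in>\<Omega>T. ennreal (qh_dist \<Omega> z z0 powr s) \<partial>lebesgue)"
      using assms by (intro nn_integral_qh_dist_essential_tube[OF hyps]) simp
    moreover have "measure lebesgue (cball (0::real^'m) r) = \<kappa> * r ^ CARD('m)"
      using essential_tubeD(2)[OF hyps(1)] by (simp add: \<kappa>_def content_cball)
    ultimately show "(\<integral>\<^sup>+ z\<in>\<Omega>T. ennreal (qh_dist \<Omega> z z0 powr s) \<partial>lebesgue)
             \<ge> ennreal (\<kappa> / (2 * 8 powr s) * c * r ^ (CARD('m) + 1) * (l / r) powr (s + 1))"
      using tube_bound_rearrange[OF essential_tubeD(1,2)[OF hyps(1)]] by metis
  qed
qed

end
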